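(* For every $n \geq 2$ and every $i \in \{2,\ldots,n\}$, the number of deranged linear arrangements of $\{1,\ldots,n\}$ whose first entry is $i$ is exactly $d_{n-1}$ (and there are none with first entry $1$).
   Context: A linear arrangement of $\{1,\ldots,n\}$ is a sequence $a_1\cdots a_n$ in which each of $1,\ldots,n$ appears exactly once; it is deranged if $a_t\ne t$ for all $t$. It contains the pattern $ij$ if $a_t=i$ and $a_{t+1}=j$ for some $t$; otherwise it avoids it. $d_m$ is the number of linear arrangements of $\{1,\ldots,m\}$ avoiding all of the patterns $12, 23, \ldots, (m-1)m$. *)

theory Defs
  imports Main
begin

definition arrangements :: "nat \<Rightarrow> nat list set" where
  "arrangements n = {xs. distinct xs \<and> set xs = {1..n}}"

definition deranged :: "nat list \<Rightarrow> bool" where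
  "deranged xs \<longleftrightarrow> (\<forall>t\<in>{1..length xs}. xs ! (t - 1) \<noteq> t)"

definition contains_pattern :: "nat list \<Rightarrow> nat \<Rightarrow> nat \<Rightarrow> bool" where
  "contains_pattern xs i j \<longleftrightarrow> (\<exists>t. t + 1 < length xs \<and> xs ! t = i \<and> xs ! (t + 1) = j)"

definition d :: "nat \<Rightarrow> nat" where
  "d m = card {xs \<in> arrangements m. \<forall>k\<in>{1..<m}. \<not> contains_pattern xs k (k + 1)}"

end

theory Submission
  imports Defs "HOL-Combinatorics.Multiset_Permutations" "HOL-Combinatorics.Transposition"
begin

text \<open>
  A deranged arrangement cannot start with 1. For \<open>2 \<le> i \<le> n\<close>, conjugation by the transposition
  \<open>(i n)\<close> preserves derangements and fixes position 1, so every first entry \<open>i \<in> {2..n}\<close> is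
  equally frequent, and it suffices to count derangements starting with \<open>n\<close>. Deleting that
  \<open>n\<close> leaves an arrangement \<open>b\<close> of \<open>{1..n-1}\<close> with \<open>b\<^sub>k \<noteq> k + 1\<close> for all \<open>k\<close>.

  So \<open>d\<^sub>m\<close> must count the arrangements of \<open>{1..m}\<close> having no \<open>k\<close> with \<open>b\<^sub>k = k + 1\<close>. Both this
  statistic and the successions \<open>k (k+1)\<close> obey the same recursion when \<open>m + 1\<close> is added:
  inserting \<open>m + 1\<close> into the word right after the value \<open>x\<close> destroys the succession
  \<open>x (x+1)\<close> and creates \<open>m (m+1)\<close> iff \<open>x = m\<close>; inserting \<open>m + 1\<close> into the cycle of the
  permutation \<open>b\<close> right after \<open>x\<close> destroys \<open>b\<^sub>x = x + 1\<close> and creates \<open>b\<^sub>m = m + 1\<close> iff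
  \<open>x = m\<close>. By induction on \<open>m\<close> this gives a bijection of arrangements transporting
  successions at \<open>k\<close> to values \<open>b\<^sub>k = k + 1\<close>, for every \<open>k\<close> simultaneously.
\<close>

lemma arrangements_eq_permutations_of_set: "arrangements m = permutations_of_set {1..m}"
  by (auto simp: arrangements_def permutations_of_set_def)

lemma finite_arrangements: "finite (arrangements m)"
  by (simp add: arrangements_eq_permutations_of_set)

lemma card_arrangements: "card (arrangements m) = fact m"
  by (simp add: arrangements_eq_permutations_of_set)

lemma length_arrangement: "xs \<in> arrangements m \<Longrightarrow> length xs = m"
  unfolding arrangements_def using distinct_card by fastforce

lemma nth_arrangement: "xs \<in> arrangements m \<Longrightarrow> t < m \<Longrightarrow> xs ! t \<in> {1..m}"
  using length_arrangement[of xs m] nth_mem[of t xs] by (auto simp: arrangements_def)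

lemma Cons_max_in_arrangements_iff: "Suc m # b \<in> arrangements (Suc m) \<longleftrightarrow> b \<in> arrangements m"
  by (auto simp: arrangements_def atLeastAtMostSuc_conv insert_ident)

lemma card_arrangements_times: "card (arrangements m \<times> {0..m}) = card (arrangements (Suc m))"
  by (simp add: card_arrangements card_cartesian_product)

lemma bij_betw_if_inj_on_card_eq:
  "inj_on f A \<Longrightarrow> f ` A \<subseteq> B \<Longrightarrow> finite B \<Longrightarrow> card A = card B \<Longrightarrow> bij_betw f A B"
  by (metis bij_betw_def card_image card_subset_eq)

lemma bij_betw_fiberwise:
  assumes "\<And>a. a \<in> A \<Longrightarrow> bij_betw (g a) B C"
  shows "bij_betw (\<lambda>(a, b). (a, g a b)) (A \<times> B) (A \<times> C)"
proof (rule bij_betw_imageI)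
  show "inj_on (\<lambda>(a, b). (a, g a b)) (A \<times> B)"
    using assms by (auto simp: inj_on_def bij_betw_def)
  show "(\<lambda>(a, b). (a, g a b)) ` (A \<times> B) = A \<times> C"
    using assms by (fastforce simp: bij_betw_def)
qed

lemma contains_pattern_Nil [simp]: "\<not> contains_pattern [] i j"
  by (simp add: contains_pattern_def)

lemma contains_pattern_Cons:
  "contains_pattern (x # ys) i j \<longleftrightarrow> (ys \<noteq> [] \<and> x = i \<and> hd ys = j) \<or> contains_pattern ys i j"
  (is "?l \<longleftrightarrow> ?r")
proof
  assume ?l
  then obtain t where t: "t + 1 < length (x # ys)" "(x # ys) ! t = i" "(x # ys) ! (t + 1) = j"
    unfolding contains_pattern_def by blast
  show ?r
  proof (cases t)
    case 0
    then show ?thesis using t by (auto simp: hd_conv_nth)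
  next
    case (Suc t')
    then show ?thesis using t unfolding contains_pattern_def by auto
  qed
next
  assume ?r
  then show ?l unfolding contains_pattern_def by (auto simp: hd_conv_nth)
qed

lemma contains_pattern_append:
  "contains_pattern (xs @ ys) i j \<longleftrightarrow> contains_pattern xs i j \<or> contains_pattern ys i j
     \<or> (xs \<noteq> [] \<and> ys \<noteq> [] \<and> last xs = i \<and> hd ys = j)"
  by (induction xs) (auto simp: contains_pattern_Cons)

lemma contains_pattern_in_set: "contains_pattern xs i j \<Longrightarrow> i \<in> set xs \<and> j \<in> set xs"
  unfolding contains_pattern_def by auto

lemma contains_pattern_not_last: "distinct xs \<Longrightarrow> contains_pattern xs i j \<Longrightarrow> last xs \<noteq> i"
proof
  assume "distinct xs" "last xs = i" and "contains_pattern xs i j"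
  then obtain t where t: "t + 1 < length xs" "xs ! t = i" unfolding contains_pattern_def by blast
  then have "xs ! t = xs ! (length xs - 1)" using \<open>last xs = i\<close> last_conv_nth[of xs] by fastforce
  then show False using t \<open>distinct xs\<close> by (simp add: nth_eq_iff_index_eq)
qed

lemma not_contains_succession_max: "w \<in> arrangements m \<Longrightarrow> \<not> contains_pattern w m (m + 1)"
  using contains_pattern_in_set[of w m "m + 1"] by (auto simp: arrangements_def)

lemma contains_succession_insert:
  assumes "distinct (u @ v)" "M \<notin> set (u @ v)" "k \<noteq> M"
  shows "contains_pattern (u @ M # v) k (k + 1) \<longleftrightarrow>
    (contains_pattern (u @ v) k (k + 1) \<and> \<not> (u \<noteq> [] \<and> last u = k))
    \<or> ((u \<noteq> [] \<and> last u = k) \<and> k + 1 = M)"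
proof -
  have "last u \<noteq> k" if "contains_pattern u k (k + 1) \<or> contains_pattern v k (k + 1)" "u \<noteq> []"
    using that(1)
  proof
    show "contains_pattern u k (k + 1) \<Longrightarrow> ?thesis"
      using assms(1) contains_pattern_not_last[of u] by simp
    show "contains_pattern v k (k + 1) \<Longrightarrow> ?thesis"
      using assms(1) contains_pattern_in_set[of v] last_in_set[OF that(2)] by auto
  qed
  then show ?thesis using assms by (auto simp: contains_pattern_append contains_pattern_Cons)
qed

definition insert_at :: "'a \<Rightarrow> 'a list \<Rightarrow> nat \<Rightarrow> 'a list" where
  "insert_at x w s = take s w @ x # drop s w"

lemma set_insert_at: "set (insert_at x w s) = insert x (set w)"
proof -
  have "set (take s w) \<union> set (drop s w) = set w" by (metis append_take_drop_id set_append)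
  then show ?thesis by (auto simp: insert_at_def)
qed

lemma distinct_insert_at: "distinct (insert_at x w s) \<longleftrightarrow> x \<notin> set w \<and> distinct w"
proof -
  have "distinct (insert_at x w s) \<longleftrightarrow> distinct (x # take s w @ drop s w)"
    unfolding insert_at_def by (simp only: distinct_append distinct.simps set_append list.set) blast
  also have "\<dots> \<longleftrightarrow> x \<notin> set w \<and> distinct w" by (simp only: append_take_drop_id distinct.simps)
  finally show ?thesis .
qed

lemma length_insert_at: "s \<le> length w \<Longrightarrow> length (insert_at x w s) = Suc (length w)"
  by (simp add: insert_at_def)

lemma nth_insert_at: "s \<le> length w \<Longrightarrow> insert_at x w s ! s = x"
  by (simp add: insert_at_def nth_append)

lemma removeAll_insert_at: "x \<notin> set w \<Longrightarrow> removeAll x (insert_at x w s) = w"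
  unfolding insert_at_def
  by (metis append_take_drop_id removeAll_append removeAll_id in_set_dropD in_set_takeD removeAll.simps(2))

lemma inj_on_insert_at:
  "inj_on (\<lambda>(w, s). insert_at x w s) {(w, s). distinct w \<and> x \<notin> set w \<and> s \<le> length w}"
proof (rule inj_onI, clarsimp)
  fix w s w' s'
  assume w: "distinct w" "x \<notin> set w" "s \<le> length w" and w': "x \<notin> set w'" "s' \<le> length w'"
    and eq: "insert_at x w s = insert_at x w' s'"
  have "w = w'" using eq removeAll_insert_at[OF w(2)] removeAll_insert_at[OF w'(1)] by metis
  moreover have "insert_at x w s ! s = insert_at x w s ! s'"
    using eq nth_insert_at[OF w(3), of x] nth_insert_at[OF w'(2), of x] by simp
  ultimately show "w = w' \<and> s = s'"
    using w w'(2) distinct_insert_at[of x w s] length_insert_at[OF w(3)]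
    by (simp add: nth_eq_iff_index_eq)
qed

lemma insert_at_in_arrangements:
  "w \<in> arrangements m \<Longrightarrow> insert_at (Suc m) w s \<in> arrangements (Suc m)"
  by (auto simp: arrangements_def distinct_insert_at set_insert_at)

lemma bij_betw_insert_at:
  "bij_betw (\<lambda>(w, s). insert_at (Suc m) w s) (arrangements m \<times> {0..m}) (arrangements (Suc m))"
proof (rule bij_betw_if_inj_on_card_eq)
  have "arrangements m \<times> {0..m} \<subseteq> {(w, s). distinct w \<and> Suc m \<notin> set w \<and> s \<le> length w}"
  proof clarify
    fix w s assume "w \<in> arrangements m" "s \<in> {0..m}"
    then show "distinct w \<and> Suc m \<notin> set w \<and> s \<le> length w"
      using length_arrangement[of w m] by (auto simp: arrangements_def)
  qed
  then show "inj_on (\<lambda>(w, s). insert_at (Suc m) w s) (arrangements m \<times> {0..m})"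
    by (rule inj_on_subset[OF inj_on_insert_at])
  show "(\<lambda>(w, s). insert_at (Suc m) w s) ` (arrangements m \<times> {0..m}) \<subseteq> arrangements (Suc m)"
    using insert_at_in_arrangements by auto
qed (simp_all add: finite_arrangements card_arrangements_times)

text \<open>The value after which \<open>insert_at\<close> places the new entry; 0 if it is placed first.\<close>
definition pred_at :: "nat list \<Rightarrow> nat \<Rightarrow> nat" where
  "pred_at w s = (if s = 0 then 0 else w ! (s - 1))"

lemma bij_betw_pred_at: "w \<in> arrangements m \<Longrightarrow> bij_betw (pred_at w) {0..m} {0..m}"
proof (rule bij_betw_if_inj_on_card_eq)
  assume w: "w \<in> arrangements m"
  then have entry: "s \<in> {1..m} \<Longrightarrow> pred_at w s \<in> {1..m}" for s
    using nth_arrangement[of w m "s - 1"] by (auto simp: pred_at_def)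
  show "pred_at w ` {0..m} \<subseteq> {0..m}"
    using entry by (force simp: pred_at_def)
  show "inj_on (pred_at w) {0..m}"
  proof (rule inj_onI)
    fix s s' assume s: "s \<in> {0..m}" "s' \<in> {0..m}" and eq: "pred_at w s = pred_at w s'"
    have "(s = 0) = (s' = 0)"
      using entry[of s] entry[of s'] s eq unfolding pred_at_def by (cases "s = 0"; cases "s' = 0") auto
    moreover have "distinct w" "length w = m" using w length_arrangement by (auto simp: arrangements_def)
    ultimately show "s = s'" using s eq by (auto simp: pred_at_def nth_eq_iff_index_eq)
  qed
qed simp_all

lemma contains_succession_insert_at:
  assumes w: "w \<in> arrangements m" and s: "s \<le> m" and k: "1 \<le> k" "k \<le> m"
  shows "contains_pattern (insert_at (Suc m) w s) k (k + 1) \<longleftrightarrow>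
    (contains_pattern w k (k + 1) \<and> k \<noteq> pred_at w s) \<or> (k = pred_at w s \<and> k = m)"
proof -
  have "length w = m" using w by (rule length_arrangement)
  then have "s \<le> length w" using s by simp
  then have "0 < s \<Longrightarrow> last (take s w) = w ! (s - 1)"
    using take_Suc_conv_app_nth[of "s - 1" w] by simp
  then have junction: "(take s w \<noteq> [] \<and> last (take s w) = k) \<longleftrightarrow> k = pred_at w s"
    using s k \<open>length w = m\<close> by (auto simp: pred_at_def)
  have "distinct (take s w @ drop s w)" "Suc m \<notin> set (take s w @ drop s w)" "k \<noteq> Suc m"
    using w k by (auto simp: arrangements_def)
  from contains_succession_insert[OF this]
  show ?thesis unfolding insert_at_def junction append_take_drop_id by simp
qed

text \<open>Read \<open>b\<close> as the permutation \<open>k \<mapsto> b ! (k - 1)\<close>. Then \<open>cycle_insert x b j\<close> inserts \<open>x\<close> into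
  the cycle of \<open>j\<close> right after \<open>j\<close>, and makes \<open>x\<close> a fixed point if \<open>j = 0\<close>.\<close>
definition cycle_insert :: "'a \<Rightarrow> 'a list \<Rightarrow> nat \<Rightarrow> 'a list" where
  "cycle_insert x b j = (if j = 0 then b @ [x] else b[j - 1 := x] @ [b ! (j - 1)])"

lemma last_cycle_insert_eq_iff:
  "x \<notin> set b \<Longrightarrow> j \<le> length b \<Longrightarrow> last (cycle_insert x b j) = x \<longleftrightarrow> j = 0"
  by (auto simp: cycle_insert_def)

lemma inj_on_cycle_insert:
  "inj_on (\<lambda>(b, j). cycle_insert x b j) {(b, j). x \<notin> set b \<and> j \<le> length b}"
proof (rule inj_onI, clarsimp)
  fix b j b' j'
  assume b: "x \<notin> set b" "j \<le> length b" and b': "x \<notin> set b'" "j' \<le> length b'"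
    and eq: "cycle_insert x b j = cycle_insert x b' j'"
  have "(j = 0) = (j' = 0)"
    using eq last_cycle_insert_eq_iff[OF b] last_cycle_insert_eq_iff[OF b'] by metis
  show "b = b' \<and> j = j'"
  proof (cases "j = 0")
    case True
    then show ?thesis using \<open>(j = 0) = (j' = 0)\<close> eq by (simp add: cycle_insert_def)
  next
    case False
    with \<open>(j = 0) = (j' = 0)\<close> have "j' \<noteq> 0" by simp
    with False eq have upd: "b[j - 1 := x] = b'[j' - 1 := x]" and last: "b ! (j - 1) = b' ! (j' - 1)"
      by (simp_all add: cycle_insert_def)
    have "length b = length b'" using arg_cong[OF upd, of length] by simp
    then have "j - 1 < length b'" using b False by simp
    moreover have "b'[j' - 1 := x] ! (j - 1) = x" using upd[symmetric] b False by simp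
    ultimately have "j - 1 = j' - 1" using b'(1) nth_mem[of "j - 1" b'] by (cases "j - 1 = j' - 1") auto
    then have "j = j'" using False \<open>j' \<noteq> 0\<close> by simp
    have "b = (b[j - 1 := x])[j - 1 := b ! (j - 1)]" by simp
    also have "\<dots> = (b'[j' - 1 := x])[j' - 1 := b' ! (j' - 1)]" using upd last \<open>j = j'\<close> by simp
    also have "\<dots> = b'" by simp
    finally show ?thesis using \<open>j = j'\<close> by simp
  qed
qed

lemma cycle_insert_in_arrangements:
  assumes b: "b \<in> arrangements m" and j: "j \<le> m"
  shows "cycle_insert (Suc m) b j \<in> arrangements (Suc m)"
proof (cases "j = 0")
  case True
  then show ?thesis using b by (auto simp: cycle_insert_def arrangements_def)
next
  case False
  have "distinct b" "set b = {1..m}" "length b = m"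
    using b length_arrangement by (auto simp: arrangements_def)
  with j False have "j - 1 < length b" by simp
  define y where "y = b ! (j - 1)"
  have y: "y \<in> {1..m}" using nth_mem[OF \<open>j - 1 < length b\<close>] \<open>set b = {1..m}\<close> by (simp add: y_def)
  have upd: "set (b[j - 1 := Suc m]) = insert (Suc m) ({1..m} - {y})" "distinct (b[j - 1 := Suc m])"
    using set_update_distinct[OF \<open>distinct b\<close> \<open>j - 1 < length b\<close>, of "Suc m"]
      distinct_list_update[OF \<open>distinct b\<close>, of "Suc m" "j - 1"] \<open>set b = {1..m}\<close>
    by (simp_all add: y_def)
  have "set (b[j - 1 := Suc m] @ [y]) = insert (Suc m) ({1..m} - {y}) \<union> {y}"
    using upd(1) by simp
  also have "\<dots> = {1..Suc m}" using y by (auto simp: atLeastAtMostSuc_conv)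
  finally have "set (b[j - 1 := Suc m] @ [y]) = {1..Suc m}" .
  moreover have "distinct (b[j - 1 := Suc m] @ [y])" using upd y by simp
  ultimately show ?thesis using False by (simp add: cycle_insert_def arrangements_def y_def)
qed

lemma bij_betw_cycle_insert:
  "bij_betw (\<lambda>(b, j). cycle_insert (Suc m) b j) (arrangements m \<times> {0..m}) (arrangements (Suc m))"
proof (rule bij_betw_if_inj_on_card_eq)
  have "arrangements m \<times> {0..m} \<subseteq> {(b, j). Suc m \<notin> set b \<and> j \<le> length b}"
  proof clarify
    fix b j assume "b \<in> arrangements m" "j \<in> {0..m}"
    then show "Suc m \<notin> set b \<and> j \<le> length b"
      using length_arrangement[of b m] by (auto simp: arrangements_def)
  qed
  then show "inj_on (\<lambda>(b, j). cycle_insert (Suc m) b j) (arrangements m \<times> {0..m})"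
    by (rule inj_on_subset[OF inj_on_cycle_insert])
  show "(\<lambda>(b, j). cycle_insert (Suc m) b j) ` (arrangements m \<times> {0..m}) \<subseteq> arrangements (Suc m)"
    using cycle_insert_in_arrangements by auto
qed (simp_all add: finite_arrangements card_arrangements_times)

lemma cycle_insert_nth_eq_succ:
  assumes b: "b \<in> arrangements m" and j: "j \<le> m" and k: "1 \<le> k" "k \<le> m"
  shows "cycle_insert (Suc m) b j ! (k - 1) = k + 1 \<longleftrightarrow> (b ! (k - 1) = k + 1 \<and> k \<noteq> j) \<or> (k = j \<and> k = m)"
proof -
  have "length b = m" using b by (rule length_arrangement)
  moreover have "b ! (k - 1) \<in> {1..m}" using nth_arrangement[OF b] k by simp
  moreover have "cycle_insert (Suc m) b j ! (k - 1) = (if k = j then Suc m else b ! (k - 1))"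
    using \<open>length b = m\<close> j k by (auto simp: cycle_insert_def nth_append)
  ultimately show ?thesis by auto
qed

lemma contains_succession_insert_at_iff_cycle_insert:
  assumes w: "w \<in> arrangements m" and s: "s \<le> m" and k: "1 \<le> k" "k \<le> m"
    and b: "b \<in> arrangements m"
    and rise: "contains_pattern w k (k + 1) \<longleftrightarrow> b ! (k - 1) = k + 1"
  shows "contains_pattern (insert_at (Suc m) w s) k (k + 1) \<longleftrightarrow>
    cycle_insert (Suc m) b (pred_at w s) ! (k - 1) = k + 1"
proof -
  have pred: "pred_at w s \<le> m" using bij_betw_apply[OF bij_betw_pred_at[OF w]] s by auto
  have "contains_pattern (insert_at (Suc m) w s) k (k + 1) \<longleftrightarrow>
      (contains_pattern w k (k + 1) \<and> k \<noteq> pred_at w s) \<or> (k = pred_at w s \<and> k = m)"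
    using w s k by (rule contains_succession_insert_at)
  also have "\<dots> \<longleftrightarrow> (b ! (k - 1) = k + 1 \<and> k \<noteq> pred_at w s) \<or> (k = pred_at w s \<and> k = m)"
    using rise by simp
  also have "\<dots> \<longleftrightarrow> cycle_insert (Suc m) b (pred_at w s) ! (k - 1) = k + 1"
    using cycle_insert_nth_eq_succ[OF b pred k] by simp
  finally show ?thesis .
qed

lemma exists_bij_successions_to_rises:
  "\<exists>f. bij_betw f (arrangements m) (arrangements m) \<and>
     (\<forall>w\<in>arrangements m. \<forall>k\<in>{1..m}. contains_pattern w k (k + 1) \<longleftrightarrow> f w ! (k - 1) = k + 1)"
proof (induction m)
  case 0
  show ?case by (intro exI[of _ id] conjI bij_betw_id) auto
next
  case (Suc m)
  then obtain f where f: "bij_betw f (arrangements m) (arrangements m)"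
    and f_rises: "\<And>w k. w \<in> arrangements m \<Longrightarrow> k \<in> {1..m} \<Longrightarrow>
      contains_pattern w k (k + 1) \<longleftrightarrow> f w ! (k - 1) = k + 1"
    by blast
  define A where "A = arrangements m \<times> {0..m}"
  define ins where "ins = (\<lambda>(w, s). insert_at (Suc m) w s)"
  define g where "g = (\<lambda>(b, j). cycle_insert (Suc m) b j) \<circ> map_prod f id
    \<circ> (\<lambda>(w, s). (w, pred_at w s)) \<circ> inv_into A ins"
  have ins: "bij_betw ins A (arrangements (Suc m))"
    unfolding ins_def A_def by (rule bij_betw_insert_at)
  have "bij_betw ((\<lambda>(w, s). (w, pred_at w s)) \<circ> inv_into A ins) (arrangements (Suc m)) A"
    using bij_betw_inv_into[OF ins] bij_betw_fiberwise[OF bij_betw_pred_at] unfolding A_def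
    by (rule bij_betw_trans)
  then have "bij_betw g (arrangements (Suc m)) (arrangements (Suc m))"
    using bij_betw_map_prod[OF f bij_betw_id] bij_betw_cycle_insert[of m]
    unfolding g_def A_def comp_assoc by (blast intro: bij_betw_trans)
  moreover have "contains_pattern w k (k + 1) \<longleftrightarrow> g w ! (k - 1) = k + 1"
    if w: "w \<in> arrangements (Suc m)" and k: "k \<in> {1..Suc m}" for w k
  proof (cases "k = Suc m")
    case True
    have "g w \<in> arrangements (Suc m)" using \<open>bij_betw g _ _\<close> w by (rule bij_betw_apply)
    then have "g w ! (k - 1) \<noteq> k + 1" using True nth_arrangement[of "g w" "Suc m" m] by auto
    then show ?thesis using True not_contains_succession_max[OF w] by simp
  next
    case False
    then have k: "1 \<le> k" "k \<le> m" using k by auto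
    obtain w' s where ws: "inv_into A ins w = (w', s)" by fastforce
    then have "(w', s) \<in> A" "ins (w', s) = w"
      using bij_betw_inv_into_right[OF ins w] bij_betw_apply[OF bij_betw_inv_into[OF ins] w] by auto
    then have w': "w' \<in> arrangements m" "s \<le> m" and w_eq: "w = insert_at (Suc m) w' s"
      by (auto simp: A_def ins_def)
    have "g w = cycle_insert (Suc m) (f w') (pred_at w' s)" by (simp add: g_def ws)
    then show ?thesis
      unfolding w_eq
      using contains_succession_insert_at_iff_cycle_insert[OF w' k bij_betw_apply[OF f w'(1)]]
        f_rises[OF w'(1)] k
      by simp
  qed
  ultimately show ?case by blast
qed

lemma d_eq_card_rise_free: "d m = card {b \<in> arrangements m. \<forall>k\<in>{1..m}. b ! (k - 1) \<noteq> k + 1}"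
proof -
  obtain f where f: "bij_betw f (arrangements m) (arrangements m)"
    and rises: "\<And>w k. w \<in> arrangements m \<Longrightarrow> k \<in> {1..m} \<Longrightarrow>
      contains_pattern w k (k + 1) \<longleftrightarrow> f w ! (k - 1) = k + 1"
    using exists_bij_successions_to_rises by blast
  have "(\<forall>k\<in>{1..m}. f w ! (k - 1) \<noteq> k + 1) \<longleftrightarrow> (\<forall>k\<in>{1..<m}. \<not> contains_pattern w k (k + 1))"
    if w: "w \<in> arrangements m" for w
  proof -
    have "(\<forall>k\<in>{1..m}. \<not> contains_pattern w k (k + 1)) \<longleftrightarrow>
        (\<forall>k\<in>{1..<m}. \<not> contains_pattern w k (k + 1))"
      using not_contains_succession_max[OF w]
      by (metis atLeastAtMost_iff atLeastLessThan_iff le_eq_less_or_eq)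
    then show ?thesis using rises[OF w] by blast
  qed
  then have "bij_betw f {w \<in> arrangements m. \<forall>k\<in>{1..<m}. \<not> contains_pattern w k (k + 1)}
      {b \<in> arrangements m. \<forall>k\<in>{1..m}. b ! (k - 1) \<noteq> k + 1}"
    by (rule bij_betw_Collect[OF f])
  then show ?thesis unfolding d_def by (rule bij_betw_same_card)
qed

lemma ball_atLeastAtMost_Suc:
  "(\<forall>t\<in>{1..Suc n}. P t) \<longleftrightarrow> P 1 \<and> (\<forall>k\<in>{1..n}. P (k + 1))" for n :: nat
proof -
  have "{1..Suc n} = insert 1 ((\<lambda>k. k + 1) ` {1..n})"
    by (auto simp: image_iff intro!: bexI[of _ "_ - 1"])
  then show ?thesis by (simp only: ball_simps)
qed

lemma deranged_Cons_iff: "deranged (x # b) \<longleftrightarrow> x \<noteq> 1 \<and> (\<forall>k\<in>{1..length b}. b ! (k - 1) \<noteq> k + 1)"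
  unfolding deranged_def length_Cons ball_atLeastAtMost_Suc by (simp add: nth_Cons')

lemma hd_deranged_ne_one: "deranged xs \<Longrightarrow> xs \<noteq> [] \<Longrightarrow> hd xs \<noteq> 1"
  by (cases xs) (auto simp: deranged_Cons_iff)

lemma card_deranged_hd_max:
  assumes "1 \<le> m"
  shows "card {xs \<in> arrangements (Suc m). deranged xs \<and> hd xs = Suc m} = d m"
proof -
  let ?R = "{b \<in> arrangements m. \<forall>k\<in>{1..m}. b ! (k - 1) \<noteq> k + 1}"
  have "xs \<in> arrangements (Suc m) \<and> deranged xs \<and> hd xs = Suc m \<longleftrightarrow> xs \<in> (#) (Suc m) ` ?R" for xs
  proof (cases xs)
    case Nil
    then show ?thesis using length_arrangement[of xs "Suc m"] by auto
  next
    case (Cons x b)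
    then show ?thesis
      using assms length_arrangement[of b m]
      by (auto simp: Cons_max_in_arrangements_iff deranged_Cons_iff)
  qed
  then have "{xs \<in> arrangements (Suc m). deranged xs \<and> hd xs = Suc m} = (#) (Suc m) ` ?R" by blast
  then show ?thesis by (simp add: card_image d_eq_card_rise_free)
qed

text \<open>Read as a permutation \<open>t \<mapsto> xs ! (t - 1)\<close> of \<open>{1..n}\<close>, \<open>conjugate \<sigma> xs\<close> is \<open>\<sigma> \<circ> xs \<circ> \<sigma>\<close>;
  this is conjugation whenever \<open>\<sigma>\<close> is an involution.\<close>
definition conjugate :: "(nat \<Rightarrow> nat) \<Rightarrow> nat list \<Rightarrow> nat list" where
  "conjugate \<sigma> xs = map (\<lambda>t. \<sigma> (xs ! (\<sigma> (Suc t) - 1))) [0..<length xs]"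

lemma length_conjugate [simp]: "length (conjugate \<sigma> xs) = length xs"
  by (simp add: conjugate_def)

lemma nth_conjugate: "t < length xs \<Longrightarrow> conjugate \<sigma> xs ! t = \<sigma> (xs ! (\<sigma> (Suc t) - 1))"
  by (simp add: conjugate_def)

lemma hd_conjugate:
  assumes "\<sigma> 1 = 1" "xs \<noteq> []"
  shows "hd (conjugate \<sigma> xs) = \<sigma> (hd xs)"
proof -
  have "conjugate \<sigma> xs \<noteq> []" using assms(2) by (metis length_conjugate length_0_conv)
  then show ?thesis using assms by (simp add: hd_conv_nth nth_conjugate)
qed

locale involution_on_interval =
  fixes \<sigma> :: "nat \<Rightarrow> nat" and n :: nat
  assumes involutive [simp]: "\<sigma> (\<sigma> x) = x"
    and maps_interval: "x \<in> {1..n} \<Longrightarrow> \<sigma> x \<in> {1..n}"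
begin

lemma conjugate_index_bounds: "t < n \<Longrightarrow> \<sigma> (Suc t) - 1 < n \<and> Suc (\<sigma> (Suc t) - 1) = \<sigma> (Suc t)"
  using maps_interval[of "Suc t"] by auto

lemma conjugate_in_arrangements:
  assumes xs: "xs \<in> arrangements n"
  shows "conjugate \<sigma> xs \<in> arrangements n"
proof -
  have l: "length xs = n" and d: "distinct xs"
    using xs length_arrangement by (auto simp: arrangements_def)
  have "distinct (conjugate \<sigma> xs)"
  proof (rule distinct_conv_nth[THEN iffD2], intro allI impI)
    fix a b assume ab: "a < length (conjugate \<sigma> xs)" "b < length (conjugate \<sigma> xs)" "a \<noteq> b"
    then have "\<sigma> (Suc a) \<noteq> \<sigma> (Suc b)" using involutive[of "Suc a"] by force
    moreover have "\<sigma> (Suc a) - 1 < n" "\<sigma> (Suc b) - 1 < n"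
      "Suc (\<sigma> (Suc a) - 1) = \<sigma> (Suc a)" "Suc (\<sigma> (Suc b) - 1) = \<sigma> (Suc b)"
      using ab l conjugate_index_bounds[of a] conjugate_index_bounds[of b] by auto
    ultimately have "xs ! (\<sigma> (Suc a) - 1) \<noteq> xs ! (\<sigma> (Suc b) - 1)"
      using d l by (simp add: nth_eq_iff_index_eq)
    then show "conjugate \<sigma> xs ! a \<noteq> conjugate \<sigma> xs ! b"
      using ab l by (simp add: nth_conjugate) (metis involutive)
  qed
  moreover have "set (conjugate \<sigma> xs) \<subseteq> {1..n}"
  proof
    fix y assume "y \<in> set (conjugate \<sigma> xs)"
    then obtain t where t: "t < n" "y = conjugate \<sigma> xs ! t" using l by (auto simp: in_set_conv_nth)
    then have "xs ! (\<sigma> (Suc t) - 1) \<in> {1..n}" using conjugate_index_bounds[OF t(1)] nth_arrangement[OF xs] by blast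
    then show "y \<in> {1..n}" using t l maps_interval by (simp add: nth_conjugate)
  qed
  moreover have "card (set (conjugate \<sigma> xs)) = card {1..n}"
    using distinct_card[OF \<open>distinct (conjugate \<sigma> xs)\<close>] l by simp
  ultimately have "set (conjugate \<sigma> xs) = {1..n}" by (simp add: card_subset_eq)
  with \<open>distinct (conjugate \<sigma> xs)\<close> show ?thesis by (simp add: arrangements_def)
qed

lemma conjugate_conjugate:
  assumes xs: "xs \<in> arrangements n"
  shows "conjugate \<sigma> (conjugate \<sigma> xs) = xs"
proof (rule nth_equalityI)
  show "length (conjugate \<sigma> (conjugate \<sigma> xs)) = length xs" by simp
  fix t assume "t < length (conjugate \<sigma> (conjugate \<sigma> xs))"
  then have "t < n" using length_arrangement[OF xs] by simp
  then show "conjugate \<sigma> (conjugate \<sigma> xs) ! t = xs ! t"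
    using conjugate_index_bounds[OF \<open>t < n\<close>] length_arrangement[OF xs] by (simp add: nth_conjugate)
qed

lemma deranged_conjugate:
  assumes xs: "xs \<in> arrangements n" and "deranged xs"
  shows "deranged (conjugate \<sigma> xs)"
  unfolding deranged_def length_conjugate
proof
  fix t assume t: "t \<in> {1..length xs}"
  have l: "length xs = n" using xs by (rule length_arrangement)
  then have "\<sigma> t \<in> {1..length xs}" using t maps_interval by simp
  then have "xs ! (\<sigma> t - 1) \<noteq> \<sigma> t" using \<open>deranged xs\<close> by (simp add: deranged_def)
  moreover have "Suc (t - 1) = t" "t - 1 < length xs" using t by auto
  ultimately show "conjugate \<sigma> xs ! (t - 1) \<noteq> t" by (metis nth_conjugate involutive)
qed

lemma deranged_conjugate_iff:
  "xs \<in> arrangements n \<Longrightarrow> deranged (conjugate \<sigma> xs) \<longleftrightarrow> deranged xs"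
  using deranged_conjugate conjugate_conjugate conjugate_in_arrangements by metis

end

lemma card_deranged_hd_eq:
  assumes i: "i \<in> {2..n}" and j: "j \<in> {2..n}"
  shows "card {xs \<in> arrangements n. deranged xs \<and> hd xs = i}
       = card {xs \<in> arrangements n. deranged xs \<and> hd xs = j}"
proof -
  define \<sigma> where "\<sigma> = Transposition.transpose i j"
  interpret involution_on_interval \<sigma> n
    using i j by unfold_locales (auto simp: \<sigma>_def Transposition.transpose_def)
  have "\<sigma> 1 = 1" "\<sigma> x = j \<longleftrightarrow> x = i" "\<sigma> x = i \<longleftrightarrow> x = j" for x
    using i j by (auto simp: \<sigma>_def Transposition.transpose_def)
  have hd: "hd (conjugate \<sigma> xs) = \<sigma> (hd xs)" if "xs \<in> arrangements n" for xs
    using \<open>\<sigma> 1 = 1\<close> i length_arrangement[OF that] by (intro hd_conjugate) auto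
  have "bij_betw (conjugate \<sigma>) {xs \<in> arrangements n. deranged xs \<and> hd xs = i}
      {xs \<in> arrangements n. deranged xs \<and> hd xs = j}"
    by (rule bij_betw_byWitness[where f' = "conjugate \<sigma>"])
      (auto simp: conjugate_conjugate conjugate_in_arrangements deranged_conjugate_iff hd
        \<open>\<sigma> _ = j \<longleftrightarrow> _ = i\<close> \<open>\<sigma> _ = i \<longleftrightarrow> _ = j\<close>)
  then show ?thesis by (rule bij_betw_same_card)
qed

theorem corollary4p6:
  fixes n :: nat
  assumes "n \<ge> 2"
  shows "(\<forall>i\<in>{2..n}. card {xs \<in> arrangements n. deranged xs \<and> hd xs = i} = d (n - 1))
       \<and> {xs \<in> arrangements n. deranged xs \<and> hd xs = 1} = {}"
proof -
  obtain m where n: "n = Suc m" and m: "1 \<le> m" using assms by (cases n) auto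
  have "card {xs \<in> arrangements n. deranged xs \<and> hd xs = i} = d (n - 1)" if "i \<in> {2..n}" for i
    using card_deranged_hd_eq[OF that, of n] card_deranged_hd_max[OF m] n assms by simp
  moreover have "{xs \<in> arrangements n. deranged xs \<and> hd xs = 1} = {}"
    using hd_deranged_ne_one length_arrangement[of _ n] assms by fastforce
  ultimately show ?thesis by blast
qed

end
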